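(* For all $n\ge 1$, $|F_n(321,3142)|=2^{n-1}$.
   Context: A permutation $\pi$ avoids a classical pattern $p\in S_k$ if no subsequence of $\pi$ of length $k$ is order-isomorphic to $p$. A Fishburn permutation is a permutation $\pi=\pi_1\cdots\pi_n$ of $[n]$ for which there are no indices $i<j$ with $\pi_j<\pi_i<\pi_{i+1}$ and $\pi_i=\pi_j+1$. $F_n(\sigma_1,\dots,\sigma_k)$ denotes the set of Fishburn permutations of length $n$ avoiding each of the classical patterns $\sigma_1,\dots,\sigma_k$. *)

theory Defs
  imports Main
begin

text \<open>Permutations of [n] are represented as lists of length n whose entries are exactly 1..n.
Positions are 0-indexed.\<close>

definition perms :: "nat \<Rightarrow> nat list set" where
  "perms n = {\<pi>. distinct \<pi> \<and> set \<pi> = {1..n}}"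

definition contains :: "nat list \<Rightarrow> nat list \<Rightarrow> bool" where
  "contains \<pi> p \<longleftrightarrow> (\<exists>idx :: nat \<Rightarrow> nat.
      (\<forall>a b. a < b \<and> b < length p \<longrightarrow> idx a < idx b) \<and>
      (\<forall>a < length p. idx a < length \<pi>) \<and>
      (\<forall>a < length p. \<forall>b < length p. (\<pi> ! idx a < \<pi> ! idx b \<longleftrightarrow> p ! a < p ! b)))"

definition avoids :: "nat list \<Rightarrow> nat list \<Rightarrow> bool" where
  "avoids \<pi> p \<longleftrightarrow> \<not> contains \<pi> p"

definition fishburn :: "nat list \<Rightarrow> bool" where
  "fishburn \<pi> \<longleftrightarrow> \<not> (\<exists>i j. i < j \<and> j < length \<pi> \<and> i + 1 < length \<pi> \<and>
      \<pi> ! j < \<pi> ! i \<and> \<pi> ! i < \<pi> ! (i + 1) \<and> \<pi> ! i = \<pi> ! j + 1)"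

definition F :: "nat \<Rightarrow> nat list list \<Rightarrow> nat list set" where
  "F n ps = {\<pi> \<in> perms n. fishburn \<pi> \<and> (\<forall>p \<in> set ps. avoids \<pi> p)}"

end

theory Submission
  imports Defs
begin

text \<open>A permutation in \<open>F\<^sub>n\<^sub>+\<^sub>1(321, 3142)\<close> ends with \<open>n\<close> or \<open>n + 1\<close>: if its last entry
\<open>x\<close> were smaller, then \<open>x + 1\<close> precedes \<open>x + 2\<close> (otherwise they form a 321 with \<open>x\<close>), the
Fishburn condition forces the entry right after \<open>x + 1\<close> below \<open>x\<close>, and these four entries
form a 3142. Deleting that last entry (and closing the gap at \<open>n\<close>) is therefore a two-to-one
map onto \<open>F\<^sub>n(321, 3142)\<close>: appending a last entry \<open>v \<in> {n, n + 1}\<close> can create neither a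
Fishburn violation nor an occurrence of 321 or 3142, as each would need two entries above \<open>v\<close>.\<close>

lemma contains_length:
  assumes "contains \<pi> p" shows "length p \<le> length \<pi>"
proof -
  obtain idx where mono: "\<forall>a b. a < b \<and> b < length p \<longrightarrow> idx a < idx b"
    and bound: "\<forall>a<length p. idx a < length \<pi>"
    using assms unfolding contains_def by blast
  have "strict_mono_on {..<length p} idx"
    by (rule strict_mono_onI) (use mono in simp)
  then have "inj_on idx {..<length p}" by (rule strict_mono_on_imp_inj_on)
  moreover have "idx ` {..<length p} \<subseteq> {..<length \<pi>}" using bound by auto
  ultimately have "card {..<length p} \<le> card {..<length \<pi>}"
    by (intro card_inj_on_le) auto
  then show ?thesis by simp
qed

lemma contains_append:
  assumes "contains s p" shows "contains (s @ t) p"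
proof -
  obtain idx where "\<forall>a b. a < b \<and> b < length p \<longrightarrow> idx a < idx b"
    and bound: "\<forall>a<length p. idx a < length s"
    and "\<forall>a<length p. \<forall>b<length p. (s ! idx a < s ! idx b) = (p ! a < p ! b)"
    using assms unfolding contains_def by blast
  moreover have "\<forall>a<length p. (s @ t) ! idx a = s ! idx a"
    using bound by (simp add: nth_append_left)
  ultimately show ?thesis
    unfolding contains_def by (intro exI[of _ idx]) auto
qed

lemma contains_map_strict_mono:
  assumes "strict_mono f" shows "contains (map f s) p \<longleftrightarrow> contains s p"
  unfolding contains_def length_map
proof (intro iff_exI conj_cong refl)
  fix idx assume "\<forall>a<length p. idx a < length s"
  then show "(\<forall>a<length p. \<forall>b<length p. (map f s ! idx a < map f s ! idx b) = (p ! a < p ! b)) \<longleftrightarrow>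
      (\<forall>a<length p. \<forall>b<length p. (s ! idx a < s ! idx b) = (p ! a < p ! b))"
    by (simp add: strict_mono_less[OF assms])
qed

lemma contains_snoc_lastE:
  assumes "contains (s @ [v]) p" "\<not> contains s p"
  obtains idx where "\<forall>a<length p. idx a \<le> length s"
    "\<forall>a<length p. \<forall>b<length p. ((s @ [v]) ! idx a < (s @ [v]) ! idx b) = (p ! a < p ! b)"
    "idx (length p - 1) = length s"
proof -
  obtain idx where mono: "\<forall>a b. a < b \<and> b < length p \<longrightarrow> idx a < idx b"
    and bound: "\<forall>a<length p. idx a < Suc (length s)"
    and order: "\<forall>a<length p. \<forall>b<length p. ((s @ [v]) ! idx a < (s @ [v]) ! idx b) = (p ! a < p ! b)"
    using assms(1) unfolding contains_def by auto
  have "p \<noteq> []" using assms(2) unfolding contains_def by auto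
  have below_last: "idx a \<le> idx (length p - 1)" if "a < length p" for a
    using mono[rule_format, of a "length p - 1"] that by (cases "a = length p - 1") (auto, linarith)
  have "idx (length p - 1) = length s"
  proof (rule ccontr)
    assume "idx (length p - 1) \<noteq> length s"
    then have "\<forall>a<length p. idx a < length s"
    proof (intro allI impI)
      fix a assume "a < length p"
      then have "idx a \<le> idx (length p - 1)" by (rule below_last)
      also have "idx (length p - 1) < length s"
        using bound[rule_format, of "length p - 1"] \<open>p \<noteq> []\<close> \<open>idx (length p - 1) \<noteq> length s\<close>
        by simp
      finally show "idx a < length s" .
    qed
    then have "contains s p"
      using mono order unfolding contains_def by (intro exI[of _ idx]) (auto simp: nth_append)
    with assms(2) show False ..
  qed
  moreover have "\<forall>a<length p. idx a \<le> length s" using bound by (simp add: less_Suc_eq_le)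
  ultimately show thesis using order that by blast
qed

definition two_above_last :: "nat list \<Rightarrow> bool" where
  "two_above_last p \<longleftrightarrow> (\<exists>a<length p. \<exists>b<length p. last p < p ! b \<and> p ! b < p ! a)"

lemma avoids_snoc_iff:
  assumes p: "two_above_last p" and small: "\<forall>x\<in>set s. x \<le> Suc v"
  shows "avoids (s @ [v]) p \<longleftrightarrow> avoids s p"
proof
  assume "avoids (s @ [v]) p"
  then show "avoids s p" unfolding avoids_def using contains_append by blast
next
  assume avoid: "avoids s p"
  show "avoids (s @ [v]) p" unfolding avoids_def
  proof
    assume "contains (s @ [v]) p"
    with avoid obtain idx where
      bound: "\<forall>a<length p. idx a \<le> length s" and
      order: "\<forall>a<length p. \<forall>b<length p. ((s @ [v]) ! idx a < (s @ [v]) ! idx b) = (p ! a < p ! b)" and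
      last: "idx (length p - 1) = length s"
      unfolding avoids_def by (elim contains_snoc_lastE)
    obtain a b where ab: "a < length p" "b < length p" "last p < p ! b" "p ! b < p ! a"
      using p unfolding two_above_last_def by blast
    have "p \<noteq> []" using ab(1) by auto
    then have "last p = p ! (length p - 1)" "length p - 1 < length p"
      by (simp_all add: last_conv_nth)
    then have "v < (s @ [v]) ! idx b"
      using order[rule_format, of "length p - 1" b] ab(2,3) last by simp
    moreover have "(s @ [v]) ! idx b < (s @ [v]) ! idx a"
      using order[rule_format, of b a] ab by simp
    moreover have "(s @ [v]) ! idx a \<le> Suc v"
      using small bound ab(1) by (cases "idx a = length s") (auto simp: nth_append)
    ultimately show False by simp
  qed
qed

lemma fishburn_snoc_iff:
  assumes small: "\<forall>x\<in>set s. x \<le> Suc v"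
  shows "fishburn (s @ [v]) \<longleftrightarrow> fishburn s"
proof
  assume fish: "fishburn (s @ [v])"
  show "fishburn s"
    unfolding fishburn_def
  proof (intro notI, elim exE conjE)
    fix i j
    assume "i < j" "j < length s" "i + 1 < length s" "s ! j < s ! i" "s ! i < s ! (i + 1)"
      "s ! i = s ! j + 1"
    moreover have "i < length s" using \<open>i < j\<close> \<open>j < length s\<close> by simp
    ultimately have "i < j \<and> j < length (s @ [v]) \<and> i + 1 < length (s @ [v]) \<and>
        (s @ [v]) ! j < (s @ [v]) ! i \<and> (s @ [v]) ! i < (s @ [v]) ! (i + 1) \<and>
        (s @ [v]) ! i = (s @ [v]) ! j + 1"
      by (simp add: nth_append_left)
    then show False using fish unfolding fishburn_def by blast
  qed
next
  assume fish: "fishburn s"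
  show "fishburn (s @ [v])"
    unfolding fishburn_def
  proof (intro notI, elim exE conjE)
    fix i j
    assume ij: "i < j" "j < length (s @ [v])" "i + 1 < length (s @ [v])"
      and viol: "(s @ [v]) ! j < (s @ [v]) ! i" "(s @ [v]) ! i < (s @ [v]) ! (i + 1)"
      "(s @ [v]) ! i = (s @ [v]) ! j + 1"
    show False
    proof (cases "j = length s")
      case True
      have "(s @ [v]) ! (i + 1) \<le> Suc v"
      proof (cases "i + 1 < length s")
        case True
        then show ?thesis using small by (simp add: nth_append_left)
      qed (use ij(3) in \<open>simp add: nth_append_right\<close>)
      moreover have "(s @ [v]) ! j = v" using True by simp
      ultimately show False using viol by simp
    next
      case False
      then have "j < length s" "i + 1 < length s" using ij by auto
      moreover from this have "s ! j < s ! i" "s ! i < s ! (i + 1)" "s ! i = s ! j + 1"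
        using viol ij(1) by (simp_all add: nth_append_left)
      ultimately show False using fish ij(1) unfolding fishburn_def by blast
    qed
  qed
qed

definition lift :: "nat \<Rightarrow> nat \<Rightarrow> nat" where
  "lift n v = (if n \<le> v then Suc v else v)"

definition lower :: "nat \<Rightarrow> nat \<Rightarrow> nat" where
  "lower n v = (if n < v then v - 1 else v)"

lemma strict_mono_lift: "strict_mono (lift n)"
  by (rule strict_monoI) (auto simp: lift_def)

lemma lower_lift [simp]: "lower n (lift n v) = v"
  by (simp add: lift_def lower_def)

lemma lift_lower: "v \<noteq> n \<Longrightarrow> lift n (lower n v) = v"
  by (auto simp: lift_def lower_def)

lemma lift_image:
  assumes "1 \<le> n" shows "lift n ` {1..n} = {1..Suc n} - {n}"
proof (intro equalityI subsetI)
  fix v assume "v \<in> {1..Suc n} - {n}"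
  with assms have "v = lift n (lower n v)" "lower n v \<in> {1..n}"
    by (auto simp: lift_def lower_def)
  then show "v \<in> lift n ` {1..n}" by blast
qed (auto simp: lift_def)

lemma fishburn_map_lift:
  assumes small: "\<forall>x\<in>set s. x \<le> n"
  shows "fishburn (map (lift n) s) \<longleftrightarrow> fishburn s"
proof -
  let ?t = "map (lift n) s"
  have "(i < j \<and> j < length ?t \<and> i + 1 < length ?t \<and>
         ?t ! j < ?t ! i \<and> ?t ! i < ?t ! (i + 1) \<and> ?t ! i = ?t ! j + 1) \<longleftrightarrow>
        (i < j \<and> j < length s \<and> i + 1 < length s \<and>
         s ! j < s ! i \<and> s ! i < s ! (i + 1) \<and> s ! i = s ! j + 1)" for i j
  proof (cases "i < j \<and> j < length s \<and> i + 1 < length s")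
    case True
    \<comment> \<open>a violation has s ! i < s ! (i + 1) \<le> n, so it never involves the value n moved by lift n\<close>
    have "s ! (i + 1) \<le> n" "s ! j \<le> n" "s ! i \<le> n" using small True by simp_all
    then show ?thesis using True by (auto simp: lift_def)
  qed auto
  then show ?thesis unfolding fishburn_def by blast
qed

lemma perms_length:
  assumes "\<sigma> \<in> perms n" shows "length \<sigma> = n"
proof -
  have "distinct \<sigma>" "set \<sigma> = {1..n}" using assms by (simp_all add: perms_def)
  then show ?thesis using distinct_card[of \<sigma>] by simp
qed

lemma perms_le: "\<sigma> \<in> perms n \<Longrightarrow> \<forall>x\<in>set \<sigma>. x \<le> n"
  by (auto simp: perms_def)

lemma snoc_Suc_perms_iff: "\<tau> @ [Suc n] \<in> perms (Suc n) \<longleftrightarrow> \<tau> \<in> perms n"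
proof
  assume "\<tau> @ [Suc n] \<in> perms (Suc n)"
  then have "distinct \<tau>" "Suc n \<notin> set \<tau>" "insert (Suc n) (set \<tau>) = {1..Suc n}"
    by (auto simp: perms_def)
  moreover from this have "set \<tau> = {1..Suc n} - {Suc n}" by blast
  moreover have "{1..Suc n} - {Suc n} = {1..n}" by auto
  ultimately show "\<tau> \<in> perms n" unfolding perms_def by simp
qed (auto simp: perms_def)

lemma snoc_lift_perms:
  assumes "\<sigma> \<in> perms n" "1 \<le> n"
  shows "map (lift n) \<sigma> @ [n] \<in> perms (Suc n)"
proof -
  have "set (map (lift n) \<sigma>) = {1..Suc n} - {n}"
    using assms lift_image by (simp add: perms_def)
  moreover have "distinct (map (lift n) \<sigma>)"
    using assms(1) strict_mono_lift strict_mono_imp_inj_on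
    by (auto simp: perms_def distinct_map intro: inj_on_subset)
  ultimately show ?thesis using assms(2) by (auto simp: perms_def)
qed

lemma snoc_perms_lower:
  assumes "\<tau> @ [n] \<in> perms (Suc n)" "1 \<le> n"
  shows "map (lower n) \<tau> \<in> perms n" "map (lift n) (map (lower n) \<tau>) = \<tau>"
proof -
  from assms(1) have "distinct \<tau>" "n \<notin> set \<tau>" "insert n (set \<tau>) = {1..Suc n}"
    unfolding perms_def by simp_all
  then have set_\<tau>: "set \<tau> = {1..Suc n} - {n}" by blast
  then show lift_lower_\<tau>: "map (lift n) (map (lower n) \<tau>) = \<tau>"
    unfolding map_map by (intro map_idI) (simp add: lift_lower)
  have "set (map (lower n) \<tau>) = lower n ` lift n ` {1..n}"
    using lift_image[OF assms(2)] set_\<tau> by simp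
  then have "set (map (lower n) \<tau>) = {1..n}" by (simp add: image_image)
  moreover have "distinct (map (lift n) (map (lower n) \<tau>))"
    using \<open>distinct \<tau>\<close> lift_lower_\<tau> by simp
  then have "distinct (map (lower n) \<tau>)" using distinct_map by blast
  ultimately show "map (lower n) \<tau> \<in> perms n" by (simp add: perms_def)
qed

lemma F_snoc_Suc_iff:
  assumes "\<forall>p\<in>set ps. two_above_last p"
  shows "\<tau> @ [Suc n] \<in> F (Suc n) ps \<longleftrightarrow> \<tau> \<in> F n ps"
proof (cases "\<tau> \<in> perms n")
  case True
  then have "\<forall>x\<in>set \<tau>. x \<le> Suc (Suc n)" using perms_le by fastforce
  then show ?thesis
    using assms True
    by (simp add: F_def snoc_Suc_perms_iff fishburn_snoc_iff avoids_snoc_iff)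
qed (simp add: F_def snoc_Suc_perms_iff)

lemma F_snoc_lift_iff:
  assumes "\<forall>p\<in>set ps. two_above_last p" "\<sigma> \<in> perms n" "1 \<le> n"
  shows "map (lift n) \<sigma> @ [n] \<in> F (Suc n) ps \<longleftrightarrow> \<sigma> \<in> F n ps"
proof -
  have small: "\<forall>x\<in>set \<sigma>. x \<le> n" using perms_le[OF assms(2)] .
  then have "\<forall>x\<in>set (map (lift n) \<sigma>). x \<le> Suc n" by (auto simp: lift_def)
  moreover have "avoids (map (lift n) \<sigma>) p \<longleftrightarrow> avoids \<sigma> p" for p
    by (simp add: avoids_def contains_map_strict_mono[OF strict_mono_lift])
  ultimately show ?thesis
    using assms snoc_lift_perms[OF assms(2,3)] fishburn_map_lift[OF small]
    by (simp add: F_def fishburn_snoc_iff avoids_snoc_iff)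
qed

lemma contains_321I:
  assumes "i < j" "j < k" "k < length \<pi>" "\<pi> ! k < \<pi> ! j" "\<pi> ! j < \<pi> ! i"
  shows "contains \<pi> [3,2,1]"
  unfolding contains_def
  by (rule exI[of _ "nth [i,j,k]"]) (use assms in \<open>auto simp: less_Suc_eq numeral_eq_Suc\<close>)

lemma contains_3142I:
  assumes "i < j" "j < k" "k < l" "l < length \<pi>"
    "\<pi> ! j < \<pi> ! l" "\<pi> ! l < \<pi> ! i" "\<pi> ! i < \<pi> ! k"
  shows "contains \<pi> [3,1,4,2]"
  unfolding contains_def
  by (rule exI[of _ "nth [i,j,k,l]"]) (use assms in \<open>auto simp: less_Suc_eq numeral_eq_Suc\<close>)

lemma fishburn_avoids_321_3142_last_ge:
  assumes "\<pi> \<in> perms (Suc n)" "fishburn \<pi>" "avoids \<pi> [3,2,1]" "avoids \<pi> [3,1,4,2]"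
  shows "n \<le> last \<pi>"
proof (rule ccontr)
  assume "\<not> n \<le> last \<pi>"
  have len: "length \<pi> = Suc n" using perms_length[OF assms(1)] .
  have "distinct \<pi>" and set_\<pi>: "set \<pi> = {1..Suc n}" using assms(1) by (simp_all add: perms_def)
  then have inj: "\<pi> ! a = \<pi> ! b \<longleftrightarrow> a = b" if "a < Suc n" "b < Suc n" for a b
    using nth_eq_iff_index_eq len that by metis
  define x where "x = \<pi> ! n"
  have "\<pi> \<noteq> []" using len by auto
  then have "last \<pi> = x" using len by (simp add: x_def last_conv_nth)
  then have "x < n" "1 \<le> x" using \<open>\<not> n \<le> last \<pi>\<close> set_\<pi> len by (auto simp: x_def)
  then have "x + 1 \<in> set \<pi>" "x + 2 \<in> set \<pi>" using set_\<pi> by auto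
  then obtain i j where i: "i < Suc n" "\<pi> ! i = x + 1" and j: "j < Suc n" "\<pi> ! j = x + 2"
    by (metis len in_set_conv_nth)
  have "i \<noteq> n" "j \<noteq> n" "i \<noteq> j" using i j by (auto simp: x_def)
  then have "i < n" "j < n" using i j by auto
  have "i < j"
  proof (rule ccontr)
    assume "\<not> i < j"
    then have "contains \<pi> [3,2,1]"
      using \<open>i \<noteq> j\<close> \<open>i < n\<close> i j len by (intro contains_321I[of j i n]) (auto simp: x_def)
    then show False using assms(3) by (simp add: avoids_def)
  qed
  define y where "y = \<pi> ! (i + 1)"
  have "i + 1 < n" using \<open>i < j\<close> \<open>j < n\<close> by simp
  have "\<not> x + 1 < y"
  proof
    assume "x + 1 < y"
    then have "i < n \<and> n < length \<pi> \<and> i + 1 < length \<pi> \<and>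
        \<pi> ! n < \<pi> ! i \<and> \<pi> ! i < \<pi> ! (i + 1) \<and> \<pi> ! i = \<pi> ! n + 1"
      using \<open>i < n\<close> \<open>i + 1 < n\<close> i len by (simp add: y_def x_def)
    then show False using assms(2) unfolding fishburn_def by blast
  qed
  moreover have "y \<noteq> x + 1" "y \<noteq> x"
    using inj[of i "i + 1"] inj[of n "i + 1"] i \<open>i + 1 < n\<close> by (auto simp: y_def x_def)
  ultimately have "y < x" by simp
  then have "i + 1 < j" using \<open>i < j\<close> j by (cases "j = i + 1") (auto simp: y_def)
  then have "contains \<pi> [3,1,4,2]"
    using \<open>y < x\<close> \<open>j < n\<close> i j len
    by (intro contains_3142I[of i "i + 1" j n]) (auto simp: y_def x_def)
  then show False using assms(4) by (simp add: avoids_def)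
qed

lemma two_above_last_321_3142: "\<forall>p\<in>set [[3,2,1],[3,1,4,2]]. two_above_last p"
proof -
  have "two_above_last [3,2,1]"
    unfolding two_above_last_def by (intro exI[of _ 0] exI[of _ 1] conjI) simp_all
  moreover have "two_above_last [3,1,4,2]"
    unfolding two_above_last_def by (intro exI[of _ 2] exI[of _ 0] conjI) simp_all
  ultimately show ?thesis by simp
qed

lemma F_321_3142_Suc:
  assumes "1 \<le> n"
  shows "F (Suc n) [[3,2,1],[3,1,4,2]] =
    (\<lambda>\<sigma>. \<sigma> @ [Suc n]) ` F n [[3,2,1],[3,1,4,2]] \<union>
    (\<lambda>\<sigma>. map (lift n) \<sigma> @ [n]) ` F n [[3,2,1],[3,1,4,2]]" (is "F (Suc n) ?ps = ?A \<union> ?B")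
proof (intro equalityI subsetI)
  note ps = two_above_last_321_3142
  fix \<pi> assume \<pi>: "\<pi> \<in> F (Suc n) ?ps"
  then have perm: "\<pi> \<in> perms (Suc n)" by (simp add: F_def)
  then have "\<pi> \<noteq> []" using perms_length by fastforce
  then have \<pi>_eq: "\<pi> = butlast \<pi> @ [last \<pi>]" by simp
  have "n \<le> last \<pi>" using \<pi> by (intro fishburn_avoids_321_3142_last_ge) (simp_all add: F_def)
  moreover have "last \<pi> \<le> Suc n" using perms_le[OF perm] \<open>\<pi> \<noteq> []\<close> by simp
  ultimately consider "last \<pi> = Suc n" | "last \<pi> = n" by linarith
  then show "\<pi> \<in> ?A \<union> ?B"
  proof cases
    case 1
    then have "butlast \<pi> \<in> F n ?ps" using \<pi> \<pi>_eq F_snoc_Suc_iff[OF ps] by metis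
    then show ?thesis using \<pi>_eq 1 by (metis UnI1 image_eqI)
  next
    case 2
    let ?\<sigma> = "map (lower n) (butlast \<pi>)"
    have "butlast \<pi> @ [n] \<in> perms (Suc n)" using perm \<pi>_eq 2 by simp
    then have "?\<sigma> \<in> perms n" "map (lift n) ?\<sigma> = butlast \<pi>"
      using snoc_perms_lower assms by blast+
    then have "?\<sigma> \<in> F n ?ps" using \<pi> \<pi>_eq 2 F_snoc_lift_iff[OF ps _ assms] by metis
    then show ?thesis using \<pi>_eq 2 \<open>map (lift n) ?\<sigma> = butlast \<pi>\<close> by (metis UnI2 image_eqI)
  qed
next
  fix \<pi> assume "\<pi> \<in> ?A \<union> ?B"
  then show "\<pi> \<in> F (Suc n) ?ps"
    using F_snoc_Suc_iff[OF two_above_last_321_3142] F_snoc_lift_iff[OF two_above_last_321_3142 _ assms]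
    by (auto simp: F_def)
qed

lemma finite_F: "finite (F n ps)"
proof (rule finite_subset)
  show "F n ps \<subseteq> {xs. set xs \<subseteq> {1..n} \<and> length xs = n}"
  proof
    fix xs assume "xs \<in> F n ps"
    then have "xs \<in> perms n" by (simp add: F_def)
    then show "xs \<in> {xs. set xs \<subseteq> {1..n} \<and> length xs = n}"
      using perms_length by (simp add: perms_def)
  qed
qed (simp add: finite_lists_length_eq)

lemma card_F_321_3142_Suc:
  assumes "1 \<le> n"
  shows "card (F (Suc n) [[3,2,1],[3,1,4,2]]) = 2 * card (F n [[3,2,1],[3,1,4,2]])"
proof -
  let ?F = "F n [[3,2,1],[3,1,4,2]]"
  have "inj_on (\<lambda>\<sigma>. \<sigma> @ [Suc n]) ?F" by (rule inj_onI) simp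
  moreover have "inj_on (\<lambda>\<sigma>. map (lift n) \<sigma> @ [n]) ?F"
    using strict_mono_imp_inj_on[OF strict_mono_lift] by (auto intro!: inj_onI dest: map_injective)
  moreover have "(\<lambda>\<sigma>. \<sigma> @ [Suc n]) ` ?F \<inter> (\<lambda>\<sigma>. map (lift n) \<sigma> @ [n]) ` ?F = {}" by auto
  ultimately show ?thesis
    unfolding F_321_3142_Suc[OF assms] by (simp add: card_Un_disjoint finite_F card_image)
qed

lemma F_one:
  assumes "\<forall>p\<in>set ps. 2 \<le> length p"
  shows "F 1 ps = {[1]}"
proof (intro equalityI subsetI)
  fix \<pi> assume "\<pi> \<in> F 1 ps"
  then have "\<pi> \<in> perms 1" by (simp add: F_def)
  then have "length \<pi> = 1" "set \<pi> = {1}" by (simp_all add: perms_length perms_def)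
  then show "\<pi> \<in> {[1]}" by (cases \<pi>) auto
next
  have "avoids [1] p" if "p \<in> set ps" for p
  proof -
    have "\<not> length p \<le> length [1::nat]" using assms that by auto
    then show ?thesis using contains_length unfolding avoids_def by blast
  qed
  then show "\<pi> \<in> F 1 ps" if "\<pi> \<in> {[1]}" for \<pi>
    using that by (simp add: F_def perms_def fishburn_def)
qed

theorem mainTheorem5:
  fixes n :: nat
  assumes "n \<ge> 1"
  shows "card (F n [[3,2,1], [3,1,4,2]]) = 2 ^ (n - 1)"
  using assms
proof (induction n rule: nat_induct_at_least)
  case base
  have "F 1 [[3,2,1], [3,1,4,2]] = {[1]}" by (rule F_one) simp
  then show ?case by simp
next
  case (Suc n)
  have "card (F (Suc n) [[3,2,1], [3,1,4,2]]) = 2 * card (F n [[3,2,1], [3,1,4,2]])"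
    using Suc.hyps by (rule card_F_321_3142_Suc)
  also have "\<dots> = 2 ^ (Suc n - 1)"
    using Suc.IH Suc.hyps by (simp add: power_Suc[symmetric])
  finally show ?case .
qed

end
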